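(* Let $A$ be a finite set with $N\ge 2$ elements and let $(v_{xy})$ be a Llull matrix on $A$ with CLC structure such that $t_{xy}>0$ for all distinct $x,y\in A$. Define $\rho_x=\frac{1}{N-1}\sum_{y\neq x}v_{xy}$ and $\sigma_x=\frac{1}{N-1}\sum_{y\neq x}v_{xy}/t_{xy}$. Then for all $x,y\in A$, $\sigma_x>\sigma_y$ if and only if $\rho_x>\rho_y$.
   Context: A Llull matrix on a finite set $A$ is an assignment to each ordered pair of distinct elements $x\neq y$ of $A$ of a number $v_{xy}\in[0,1]$ such that $v_{xy}+v_{yx}\le 1$. Turnouts: $t_{xy}=v_{xy}+v_{yx}$; margins: $m_{xy}=v_{xy}-v_{yx}$. The matrix has CLC structure if there is a total order $\xi$ on $A$ such that, writing $x<_\xi y$ when $x$ precedes $y$ and $x'$ for the immediate successor of $x$ in $\xi$ (when it exists): (i) $v_{xy}\ge v_{yx}$ whenever $x<_\xi y$; (ii) $v_{xz}=\max(v_{xy},v_{yz})$ whenever $x<_\xi y<_\xi z$; (iii) $v_{zx}=\min(v_{zy},v_{yx})$ whenever $x<_\xi y<_\xi z$; (iv) $0\le t_{xz}-t_{x'z}\le m_{xx'}$ whenever $x'$ exists and $z\notin\{x,x'\}$. *)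

theory Defs
  imports Complex_Main
begin

definition llull_matrix :: "'a set \<Rightarrow> ('a \<Rightarrow> 'a \<Rightarrow> real) \<Rightarrow> bool" where
  "llull_matrix A v \<longleftrightarrow>
     (\<forall>x\<in>A. \<forall>y\<in>A. x \<noteq> y \<longrightarrow> 0 \<le> v x y \<and> v x y \<le> 1 \<and> v x y + v y x \<le> 1)"

definition turnout :: "('a \<Rightarrow> 'a \<Rightarrow> real) \<Rightarrow> 'a \<Rightarrow> 'a \<Rightarrow> real" where
  "turnout v x y = v x y + v y x"

definition margin :: "('a \<Rightarrow> 'a \<Rightarrow> real) \<Rightarrow> 'a \<Rightarrow> 'a \<Rightarrow> real" where
  "margin v x y = v x y - v y x"

definition prec :: "'a rel \<Rightarrow> 'a \<Rightarrow> 'a \<Rightarrow> bool" where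
  "prec r x y \<longleftrightarrow> (x, y) \<in> r \<and> x \<noteq> y"

definition imm_succ :: "'a set \<Rightarrow> 'a rel \<Rightarrow> 'a \<Rightarrow> 'a \<Rightarrow> bool" where
  "imm_succ A r x y \<longleftrightarrow> x \<in> A \<and> y \<in> A \<and> prec r x y \<and>
     \<not> (\<exists>z\<in>A. prec r x z \<and> prec r z y)"

definition clc_order :: "'a set \<Rightarrow> ('a \<Rightarrow> 'a \<Rightarrow> real) \<Rightarrow> 'a rel \<Rightarrow> bool" where
  "clc_order A v r \<longleftrightarrow>
     linear_order_on A r \<and>
     (\<forall>x\<in>A. \<forall>y\<in>A. prec r x y \<longrightarrow> v x y \<ge> v y x) \<and>
     (\<forall>x\<in>A. \<forall>y\<in>A. \<forall>z\<in>A. prec r x y \<and> prec r y z \<longrightarrow> v x z = max (v x y) (v y z)) \<and>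
     (\<forall>x\<in>A. \<forall>y\<in>A. \<forall>z\<in>A. prec r x y \<and> prec r y z \<longrightarrow> v z x = min (v z y) (v y x)) \<and>
     (\<forall>x\<in>A. \<forall>x'\<in>A. \<forall>z\<in>A. imm_succ A r x x' \<and> z \<noteq> x \<and> z \<noteq> x' \<longrightarrow>
        0 \<le> turnout v x z - turnout v x' z \<and> turnout v x z - turnout v x' z \<le> margin v x x')"

definition has_clc_structure :: "'a set \<Rightarrow> ('a \<Rightarrow> 'a \<Rightarrow> real) \<Rightarrow> bool" where
  "has_clc_structure A v \<longleftrightarrow> (\<exists>r. clc_order A v r)"

end

theory Submission
  imports Defs
begin

text \<open>Along the CLC order both row sums \<open>\<Sum>y. v x y\<close> and \<open>\<Sum>y. v x y / t x y\<close> are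
  weakly decreasing: passing from x to its successor x' lowers each entry, and each ratio
  \<open>v x z / (v x z + v z x)\<close>, since (ii) and (iii) make \<open>v x z\<close> decrease and \<open>v z x\<close> increase.
  Moreover one sum stays constant across such a step iff the other does: either forces the
  margin \<open>m x x'\<close> to vanish, and then (iv) makes the turnouts of x and x' against every z equal,
  so raw entries and ratios agree or differ together. Chaining these steps, the two row sums
  induce the same strict order on A.\<close>

lemma prec_trans:
  assumes "linear_order_on A r" "prec r x y" "prec r y z"
  shows "prec r x z"
  using assms unfolding prec_def order_on_defs trans_def antisym_def by blast

lemma prec_total:
  assumes "linear_order_on A r" "x \<in> A" "y \<in> A" "x \<noteq> y"
  shows "prec r x y \<or> prec r y x"
  using assms unfolding prec_def linear_order_on_def total_on_def by blast

lemma linear_order_imm_succ_induct: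
  assumes "finite A" and "linear_order_on A r"
    and trans: "\<And>x y z. x \<in> A \<Longrightarrow> y \<in> A \<Longrightarrow> z \<in> A \<Longrightarrow> R x y \<Longrightarrow> R y z \<Longrightarrow> R x z"
    and succ: "\<And>x y. imm_succ A r x y \<Longrightarrow> R x y"
    and "x \<in> A" "y \<in> A" "prec r x y"
  shows "R x y"
  using assms(5-7)
proof (induction "card {z\<in>A. prec r x z \<and> prec r z y}" arbitrary: x y rule: less_induct)
  case less
  show ?case
  proof (cases "\<exists>z\<in>A. prec r x z \<and> prec r z y")
    case False
    then show ?thesis using less.prems by (intro succ) (simp add: imm_succ_def)
  next
    case True
    then obtain z where z: "z \<in> A" "prec r x z" "prec r z y" by blast
    let ?between = "\<lambda>a b. {w\<in>A. prec r a w \<and> prec r w b}"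
    have "z \<in> ?between x y - ?between x z" "z \<in> ?between x y - ?between z y"
      using z by (auto simp: prec_def)
    moreover have "?between x z \<subseteq> ?between x y" "?between z y \<subseteq> ?between x y"
      using z prec_trans[OF assms(2)] by blast+
    ultimately have "card (?between x z) < card (?between x y)"
      "card (?between z y) < card (?between x y)"
      using \<open>finite A\<close> by (auto intro!: psubset_card_mono)
    then show ?thesis using less z by (blast intro: trans)
  qed
qed

lemma divide_sum_le_divide_sum:
  fixes a a' b b' :: real
  assumes "0 \<le> a" "a \<le> a'" "0 \<le> b'" "b' \<le> b" "a + b > 0" "a' + b' > 0"
  shows "a / (a + b) \<le> a' / (a' + b')"
proof -
  have "a * b' \<le> a' * b" using assms by (intro mult_mono) auto
  then show ?thesis using assms by (simp add: divide_simps algebra_simps)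
qed

lemma clc_imm_succ_entries:
  assumes clc: "clc_order A v r" and succ: "imm_succ A r x x'"
    and z: "z \<in> A" "z \<noteq> x" "z \<noteq> x'"
  shows "v x' z \<le> v x z" and "v z x \<le> v z x'"
proof -
  have lin: "linear_order_on A r" and xA: "x \<in> A" and x'A: "x' \<in> A" and xx': "prec r x x'"
    using clc succ by (auto simp: clc_order_def imm_succ_def)
  have max: "v a c = max (v a b) (v b c)" and min: "v c a = min (v c b) (v b a)"
    if "a \<in> A" "b \<in> A" "c \<in> A" "prec r a b" "prec r b c" for a b c
    using clc that unfolding clc_order_def by blast+
  have "prec r z x \<or> prec r x' z"
    using succ z prec_total[OF lin z(1) xA] prec_total[OF lin z(1) x'A]
    unfolding imm_succ_def by blast
  then show "v x' z \<le> v x z" "v z x \<le> v z x'"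
    using max[of z x x'] min[of z x x'] max[of x x' z] min[of x x' z] z(1) xA x'A xx'
    by auto
qed

definition row_sum :: "'a set \<Rightarrow> ('a \<Rightarrow> 'a \<Rightarrow> real) \<Rightarrow> 'a \<Rightarrow> real" where
  "row_sum A w x = (\<Sum>y\<in>A - {x}. w x y)"

lemma row_sum_split:
  assumes "finite A" "x' \<in> A" "x \<noteq> x'"
  shows "row_sum A w x = w x x' + (\<Sum>z\<in>A - {x, x'}. w x z)"
proof -
  have "A - {x} = insert x' (A - {x, x'})" using assms by auto
  then show ?thesis using assms(1) by (simp add: row_sum_def)
qed

definition jointly_ge :: "('a \<Rightarrow> real) \<Rightarrow> ('a \<Rightarrow> real) \<Rightarrow> 'a \<Rightarrow> 'a \<Rightarrow> bool" where
  "jointly_ge f g x y \<longleftrightarrow> f y \<le> f x \<and> g y \<le> g x \<and> (f y < f x \<longleftrightarrow> g y < g x)"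

lemma jointly_ge_trans: "jointly_ge f g x y \<Longrightarrow> jointly_ge f g y z \<Longrightarrow> jointly_ge f g x z"
  unfolding jointly_ge_def by linarith

lemma clc_imm_succ_jointly_ge:
  assumes fin: "finite A" and llull: "llull_matrix A v" and clc: "clc_order A v r"
    and pos: "\<forall>x\<in>A. \<forall>y\<in>A. x \<noteq> y \<longrightarrow> turnout v x y > 0"
    and succ: "imm_succ A r x x'"
  shows "jointly_ge (row_sum A v) (row_sum A (\<lambda>a b. v a b / turnout v a b)) x x'"
proof -
  let ?q = "\<lambda>a b. v a b / turnout v a b" and ?B = "A - {x, x'}"
  have xA: "x \<in> A" and x'A: "x' \<in> A" and xx': "prec r x x'" and "x \<noteq> x'"
    using succ by (auto simp: imm_succ_def prec_def)
  define m where "m = margin v x x'"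
  define t where "t = turnout v x x'"
  have "0 \<le> m" using clc xA x'A xx' by (simp add: clc_order_def m_def margin_def)
  have "0 < t" using pos xA x'A \<open>x \<noteq> x'\<close> by (simp add: t_def)
  have "turnout v x' x = t" by (simp add: t_def turnout_def)
  have B: "z \<in> A" "z \<noteq> x" "z \<noteq> x'" if "z \<in> ?B" for z using that by auto
  have turnout_B: "0 \<le> turnout v x z - turnout v x' z \<and> turnout v x z - turnout v x' z \<le> m"
    if "z \<in> ?B" for z
    using clc succ B[OF that] xA x'A unfolding clc_order_def m_def by blast
  have termR: "0 \<le> v x z - v x' z" if "z \<in> ?B" for z
    using clc_imm_succ_entries(1)[OF clc succ B[OF that]] by simp
  have termS: "0 \<le> ?q x z - ?q x' z" if "z \<in> ?B" for z
  proof -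
    have "0 \<le> v x' z" "0 \<le> v z x" using llull B[OF that] xA x'A by (auto simp: llull_matrix_def)
    moreover have "0 < turnout v x z" "0 < turnout v x' z" using pos B[OF that] xA x'A by auto
    ultimately show ?thesis
      using divide_sum_le_divide_sum[of "v x' z" "v x z" "v z x" "v z x'"]
        clc_imm_succ_entries[OF clc succ B[OF that]]
      by (simp add: turnout_def)
  qed
  have dR: "row_sum A v x - row_sum A v x' = m + (\<Sum>z\<in>?B. v x z - v x' z)"
    using row_sum_split[OF fin x'A \<open>x \<noteq> x'\<close>] row_sum_split[OF fin xA, of x']
      \<open>x \<noteq> x'\<close>
    by (simp add: m_def margin_def sum_subtractf insert_commute)
  have dS: "row_sum A ?q x - row_sum A ?q x' = m / t + (\<Sum>z\<in>?B. ?q x z - ?q x' z)"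
    using row_sum_split[OF fin x'A \<open>x \<noteq> x'\<close>] row_sum_split[OF fin xA, of x']
      \<open>x \<noteq> x'\<close> \<open>turnout v x' x = t\<close>
    by (simp add: m_def margin_def t_def sum_subtractf insert_commute diff_divide_distrib)
  have "0 \<le> m / t" using \<open>0 \<le> m\<close> \<open>0 < t\<close> by simp
  have sumR: "0 \<le> (\<Sum>z\<in>?B. v x z - v x' z)" and sumS: "0 \<le> (\<Sum>z\<in>?B. ?q x z - ?q x' z)"
    using termR termS by (simp_all only: sum_nonneg)
  have "(\<Sum>z\<in>?B. v x z - v x' z) = 0 \<longleftrightarrow> (\<forall>z\<in>?B. v x z - v x' z = 0)"
    using fin termR by (intro sum_nonneg_eq_0_iff) auto
  then have zeroR: "row_sum A v x = row_sum A v x' \<longleftrightarrow> m = 0 \<and> (\<forall>z\<in>?B. v x z = v x' z)"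
    using dR add_nonneg_eq_0_iff[OF \<open>0 \<le> m\<close> sumR] by auto
  have "(\<Sum>z\<in>?B. ?q x z - ?q x' z) = 0 \<longleftrightarrow> (\<forall>z\<in>?B. ?q x z - ?q x' z = 0)"
    using fin termS by (intro sum_nonneg_eq_0_iff) auto
  then have zeroS: "row_sum A ?q x = row_sum A ?q x' \<longleftrightarrow> m = 0 \<and> (\<forall>z\<in>?B. ?q x z = ?q x' z)"
    using dS add_nonneg_eq_0_iff[OF \<open>0 \<le> m / t\<close> sumS] \<open>0 < t\<close> by auto
  have "?q x z = ?q x' z \<longleftrightarrow> v x z = v x' z" if "m = 0" "z \<in> ?B" for z
  proof -
    have "turnout v x z = turnout v x' z" using turnout_B[OF that(2)] that(1) by simp
    moreover have "0 < turnout v x z" using pos B[OF that(2)] xA by auto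
    ultimately show ?thesis by simp
  qed
  then have "row_sum A v x = row_sum A v x' \<longleftrightarrow> row_sum A ?q x = row_sum A ?q x'"
    using zeroR zeroS by blast
  then show ?thesis
    unfolding jointly_ge_def
    using dR dS \<open>0 \<le> m\<close> \<open>0 \<le> m / t\<close> sumR sumS by linarith
qed

theorem corollary3p7:
  fixes A :: "'a set" and v :: "'a \<Rightarrow> 'a \<Rightarrow> real"
  assumes "finite A" and "card A \<ge> 2"
    and "llull_matrix A v" and "has_clc_structure A v"
    and "\<forall>x\<in>A. \<forall>y\<in>A. x \<noteq> y \<longrightarrow> turnout v x y > 0"
  defines "\<rho> \<equiv> (\<lambda>x. (\<Sum>y\<in>A - {x}. v x y) / (real (card A) - 1))"
    and "\<sigma> \<equiv> (\<lambda>x. (\<Sum>y\<in>A - {x}. v x y / turnout v x y) / (real (card A) - 1))"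
  shows "\<forall>x\<in>A. \<forall>y\<in>A. \<sigma> x > \<sigma> y \<longleftrightarrow> \<rho> x > \<rho> y"
proof -
  let ?R = "row_sum A v" and ?S = "row_sum A (\<lambda>a b. v a b / turnout v a b)"
  obtain r where clc: "clc_order A v r"
    using assms(4) unfolding has_clc_structure_def by blast
  then have lin: "linear_order_on A r" by (simp add: clc_order_def)
  have jointly: "jointly_ge ?R ?S x y" if "x \<in> A" "y \<in> A" "prec r x y" for x y
    by (rule linear_order_imm_succ_induct[OF assms(1) lin _ _ that])
      (blast intro: jointly_ge_trans clc_imm_succ_jointly_ge[OF assms(1,3) clc assms(5)])+
  have "real (card A) - 1 > 0" using assms(2) by simp
  then have scale: "\<rho> x > \<rho> y \<longleftrightarrow> ?R x > ?R y" "\<sigma> x > \<sigma> y \<longleftrightarrow> ?S x > ?S y" for x y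
    by (simp_all add: \<rho>_def \<sigma>_def row_sum_def divide_less_cancel)
  show ?thesis
  proof (intro ballI)
    fix x y assume "x \<in> A" "y \<in> A"
    then consider "x = y" | "jointly_ge ?R ?S x y" | "jointly_ge ?R ?S y x"
      using prec_total[OF lin] jointly by blast
    then show "\<sigma> x > \<sigma> y \<longleftrightarrow> \<rho> x > \<rho> y"
      unfolding scale jointly_ge_def by cases auto
  qed
qed

end
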